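(* Let $G=(V,E)$ be a connected undirected unweighted graph on $n$ nodes, let $S\subseteq V$, and let $\delta\geq 1$ be a real number. Then the expected absorption time of the positional Voter process on $G$ with biased set $S$ and bias $\delta$ satisfies $\operatorname{T}(G^S,\delta)\leq n^5$.
   Context: Positional Voter model. A graph $G=(V,E,w)$ has node set $V$ with $|V|=n$, edge set $E\subseteq V\times V$ and weights $w\colon E\to\mathbb{R}_{>0}$; $\operatorname{in}(u)=\{v\in V:(v,u)\in E\}$. "Undirected unweighted" means $E$ is symmetric and $w\equiv 1$. A configuration is a set $X\subseteq V$ (the nodes carrying the novel trait $A$; the others carry trait $B$). Given a biased set $S\subseteq V$ and bias $\delta\ge 0$, define $f^S_X(v\mid u)=1+\delta$ if $v\in X$ and $u\in S$, and $f^S_X(v\mid u)=1$ otherwise. The process $(\mathcal{X}_t)_{t\ge0}$ evolves as follows: given $\mathcal{X}_t=X$, a node $u$ is chosen uniformly at random from $V$, then a node $v\in\operatorname{in}(u)$ is chosen with probability $\frac{f^S_X(v\mid u)\,w(v,u)}{\sum_{x\in\operatorname{in}(u)} f^S_X(x\mid u)\,w(x,u)}$, and $u$ adopts the trait of $v$, i.e. $\mathcal{X}_{t+1}=X\cup\{u\}$ if $v\in X$ and $\mathcal{X}_{t+1}=X\setminus\{u\}$ otherwise. Unless stated otherwise, $\mathcal{X}_0=\{u\}$ with $u$ uniformly random in $V$. The absorption time is the first $t$ with $\mathcal{X}_t\in\{\emptyset,V\}$, and $\operatorname{T}(G^S,\delta)$ denotes its expectation. *)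

theory Defs
  imports "HOL-Probability.Probability"
begin

definition in_nbrs :: "('a \<times> 'a) set \<Rightarrow> 'a \<Rightarrow> 'a set" where
  "in_nbrs E u = {v. (v, u) \<in> E}"

definition pv_fit :: "'a set \<Rightarrow> real \<Rightarrow> 'a set \<Rightarrow> 'a \<Rightarrow> 'a \<Rightarrow> real" where
  "pv_fit S \<delta> X v u = (if v \<in> X \<and> u \<in> S then 1 + \<delta> else 1)"

definition pv_pick :: "('a \<times> 'a) set \<Rightarrow> ('a \<times> 'a \<Rightarrow> real) \<Rightarrow> 'a set \<Rightarrow> real
    \<Rightarrow> 'a set \<Rightarrow> 'a \<Rightarrow> 'a pmf" where
  "pv_pick E w S \<delta> X u = embed_pmf (\<lambda>v. if v \<in> in_nbrs E u
      then pv_fit S \<delta> X v u * w (v, u) / (\<Sum>x\<in>in_nbrs E u. pv_fit S \<delta> X x u * w (x, u))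
      else 0)"

definition pv_step :: "'a set \<Rightarrow> ('a \<times> 'a) set \<Rightarrow> ('a \<times> 'a \<Rightarrow> real) \<Rightarrow> 'a set \<Rightarrow> real
    \<Rightarrow> 'a set \<Rightarrow> 'a set pmf" where
  "pv_step V E w S \<delta> X =
     (if X = {} \<or> X = V then return_pmf X
      else bind_pmf (pmf_of_set V) (\<lambda>u.
             map_pmf (\<lambda>v. if v \<in> X then insert u X else X - {u}) (pv_pick E w S \<delta> X u)))"

definition pv_dist :: "'a set \<Rightarrow> ('a \<times> 'a) set \<Rightarrow> ('a \<times> 'a \<Rightarrow> real) \<Rightarrow> 'a set \<Rightarrow> real
    \<Rightarrow> nat \<Rightarrow> 'a set pmf" where
  "pv_dist V E w S \<delta> t =
     ((\<lambda>p. bind_pmf p (pv_step V E w S \<delta>)) ^^ t) (map_pmf (\<lambda>u. {u}) (pmf_of_set V))"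

text \<open>Expected absorption time T(G^S, delta) = sum over t of P(tau > t) = P(X_t not absorbed).\<close>
definition pv_absorption_time :: "'a set \<Rightarrow> ('a \<times> 'a) set \<Rightarrow> ('a \<times> 'a \<Rightarrow> real) \<Rightarrow> 'a set
    \<Rightarrow> real \<Rightarrow> ennreal" where
  "pv_absorption_time V E w S \<delta> =
     (\<Sum>t. ennreal (measure_pmf.prob (pv_dist V E w S \<delta> t) {X. X \<noteq> {} \<and> X \<noteq> V}))"

end

theory Submission
  imports Defs
begin

text \<open>
  Write vol(X) for the sum of the degrees of the nodes in X. If the chosen node u has a neighbours
  in X and b outside, it joins X with probability at least a/(a+b) and leaves it with probability
  at most b/(a+b), because the bias only favours X. Summing over u, the expected increase of
  vol(X)^2 is at least the sum over u \<notin> X of 2 vol(X) a + a (a+b) minus the sum over u \<in> X of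
  2 vol(X) b. The linear terms cancel, as both sums count the edges across the cut, and by
  connectivity some u \<notin> X has a \<ge> 1. So vol^2 grows by at least 1/n per step in expectation while
  never exceeding vol(V)^2 \<le> n^4, and an additive drift argument gives T \<le> n \<cdot> n^4.
\<close>

lemma expectation_bind_step_ge:
  fixes step :: "'s \<Rightarrow> 's pmf" and \<psi> :: "'s \<Rightarrow> real"
  assumes P: "finite P" "set_pmf p \<subseteq> P"
    and closed: "\<And>x. x \<in> P \<Longrightarrow> set_pmf (step x) \<subseteq> P"
    and absorbing: "\<And>x. x \<in> P \<Longrightarrow> x \<notin> N \<Longrightarrow> step x = return_pmf x"
    and drift: "\<And>x. x \<in> P \<Longrightarrow> x \<in> N \<Longrightarrow> \<psi> x + c \<le> measure_pmf.expectation (step x) \<psi>"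
  shows "measure_pmf.expectation p \<psi> + c * measure_pmf.prob p N
           \<le> measure_pmf.expectation (p \<bind> step) \<psi>"
proof -
  have fin_step: "finite (set_pmf (step x))" if "x \<in> P" for x
    using closed[OF that] P(1) by (rule finite_subset)
  have "measure_pmf.expectation p \<psi> + c * measure_pmf.prob p N
      = (\<Sum>x\<in>P. pmf p x * (\<psi> x + c * indicator N x))"
  proof -
    have "measure_pmf.expectation p (indicator N) = (\<Sum>x\<in>P. indicator N x * pmf p x)"
      by (rule integral_measure_pmf_real) (use P in auto)
    moreover have "measure_pmf.expectation p \<psi> = (\<Sum>x\<in>P. \<psi> x * pmf p x)"
      using P by (auto intro!: integral_measure_pmf_real)
    ultimately show ?thesis
      by (simp add: distrib_left sum.distrib sum_distrib_left mult_ac)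
  qed
  also have "\<dots> \<le> (\<Sum>x\<in>P. pmf p x * measure_pmf.expectation (step x) \<psi>)"
  proof (intro sum_mono mult_left_mono)
    fix x assume x: "x \<in> P"
    show "\<psi> x + c * indicator N x \<le> measure_pmf.expectation (step x) \<psi>"
      using drift[OF x] absorbing[OF x] by (cases "x \<in> N") simp_all
  qed simp
  also have "\<dots> = measure_pmf.expectation (p \<bind> step) \<psi>"
    using P fin_step by (subst pmf_expectation_bind[of P]) auto
  finally show ?thesis .
qed

lemma absorption_sum_le_potential_gap:
  fixes step :: "'s \<Rightarrow> 's pmf" and \<psi> :: "'s \<Rightarrow> real"
  assumes P: "finite P" "set_pmf p0 \<subseteq> P"
    and closed: "\<And>x. x \<in> P \<Longrightarrow> set_pmf (step x) \<subseteq> P"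
    and bounded: "\<And>x. x \<in> P \<Longrightarrow> \<psi> x \<le> M"
    and absorbing: "\<And>x. x \<in> P \<Longrightarrow> x \<notin> N \<Longrightarrow> step x = return_pmf x"
    and drift: "\<And>x. x \<in> P \<Longrightarrow> x \<in> N \<Longrightarrow> \<psi> x + c \<le> measure_pmf.expectation (step x) \<psi>"
    and c: "c > 0"
  shows "(\<Sum>t. ennreal (measure_pmf.prob (((\<lambda>p. p \<bind> step) ^^ t) p0) N))
           \<le> ennreal ((M - measure_pmf.expectation p0 \<psi>) / c)"
proof -
  define p where "p t = ((\<lambda>p. p \<bind> step) ^^ t) p0" for t
  have p_Suc: "p (Suc t) = p t \<bind> step" for t
    by (simp add: p_def)
  have support: "set_pmf (p t) \<subseteq> P" for t
    by (induction t) (use P closed in \<open>auto simp: p_def\<close>)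
  have telescope: "measure_pmf.expectation p0 \<psi> + c * (\<Sum>t<T. measure_pmf.prob (p t) N)
      \<le> measure_pmf.expectation (p T) \<psi>" for T
  proof (induction T)
    case 0 then show ?case by (simp add: p_def)
  next
    case (Suc T)
    have "measure_pmf.expectation (p T) \<psi> + c * measure_pmf.prob (p T) N
        \<le> measure_pmf.expectation (p (Suc T)) \<psi>"
      unfolding p_Suc using P(1) support closed absorbing drift
      by (rule expectation_bind_step_ge)
    with Suc show ?case by (simp add: distrib_left)
  qed
  have le_M: "measure_pmf.expectation (p T) \<psi> \<le> M" for T
    using support bounded
    by (intro measure_pmf.integral_le_const) (auto simp: AE_measure_pmf_iff
        intro!: integrable_measure_pmf_finite finite_subset[OF support P(1)])
  have partial: "(\<Sum>t<T. measure_pmf.prob (p t) N) \<le> (M - measure_pmf.expectation p0 \<psi>) / c" for T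
  proof -
    have "c * (\<Sum>t<T. measure_pmf.prob (p t) N) \<le> M - measure_pmf.expectation p0 \<psi>"
      using telescope[of T] le_M[of T] by linarith
    then show ?thesis using c by (simp add: pos_le_divide_eq mult.commute)
  qed
  show ?thesis
    unfolding p_def[symmetric]
  proof (intro suminf_le_const[OF summableI])
    fix T
    show "(\<Sum>t<T. ennreal (measure_pmf.prob (p t) N)) \<le> ennreal ((M - measure_pmf.expectation p0 \<psi>) / c)"
      using partial[of T] by (simp add: sum_ennreal ennreal_leI)
  qed
qed

lemma in_nbrs_subset: "E \<subseteq> V \<times> V \<Longrightarrow> in_nbrs E u \<subseteq> V"
  by (auto simp: in_nbrs_def)

lemma finite_in_nbrs: "finite V \<Longrightarrow> E \<subseteq> V \<times> V \<Longrightarrow> finite (in_nbrs E u)"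
  using in_nbrs_subset finite_subset by metis

lemma in_nbrs_nonempty: "(w, u) \<in> E\<^sup>* \<Longrightarrow> w \<noteq> u \<Longrightarrow> in_nbrs E u \<noteq> {}"
  by (auto simp: in_nbrs_def elim: rtranclE)

definition vol :: "('a \<times> 'a) set \<Rightarrow> 'a set \<Rightarrow> real" where
  "vol E X = (\<Sum>v\<in>X. real (card (in_nbrs E v)))"

lemma vol_nonneg: "0 \<le> vol E X"
  by (simp add: vol_def sum_nonneg)

lemma vol_mono: "finite B \<Longrightarrow> A \<subseteq> B \<Longrightarrow> vol E A \<le> vol E B"
  unfolding vol_def by (rule sum_mono2) auto

lemma vol_le_card_sq:
  assumes "finite V" and "E \<subseteq> V \<times> V"
  shows "vol E V \<le> real (card V) ^ 2"
proof -
  have "real (card (in_nbrs E v)) \<le> real (card V)" for v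
    by (intro of_nat_mono card_mono assms(1) in_nbrs_subset[OF assms(2)])
  then have "vol E V \<le> (\<Sum>v\<in>V. real (card V))"
    unfolding vol_def by (rule sum_mono)
  then show ?thesis by (simp add: power2_eq_square)
qed

lemma rtrancl_leaves_set: "(x, y) \<in> E\<^sup>* \<Longrightarrow> x \<in> X \<Longrightarrow> y \<notin> X \<Longrightarrow> \<exists>p q. (p, q) \<in> E \<and> p \<in> X \<and> q \<notin> X"
  by (induction rule: rtrancl_induct) blast+

lemma sum_card_in_nbrs_cut_sym:
  assumes V: "finite V" and EV: "E \<subseteq> V \<times> V" and symE: "sym E" and XV: "X \<subseteq> V"
  shows "(\<Sum>u\<in>V - X. card (in_nbrs E u \<inter> X)) = (\<Sum>u\<in>X. card (in_nbrs E u - X))"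
proof -
  have X: "finite X" using V XV by (rule finite_subset[rotated])
  have card_filter: "card {v \<in> A. P v} = (\<Sum>v\<in>A. if P v then 1 else 0)" if "finite A" for A P
    using that by (simp flip: sum.inter_filter)
  have "(\<Sum>u\<in>V - X. card (in_nbrs E u \<inter> X)) = (\<Sum>u\<in>V - X. \<Sum>v\<in>X. if (v, u) \<in> E then 1 else 0)"
  proof (intro sum.cong refl)
    fix u
    have "in_nbrs E u \<inter> X = {v \<in> X. (v, u) \<in> E}" by (auto simp: in_nbrs_def)
    then show "card (in_nbrs E u \<inter> X) = (\<Sum>v\<in>X. if (v, u) \<in> E then 1 else 0)"
      using X by (simp add: card_filter)
  qed
  also have "\<dots> = (\<Sum>v\<in>X. \<Sum>u\<in>V - X. if (u, v) \<in> E then 1 else 0)"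
    using symE by (subst sum.swap) (intro sum.cong refl, auto dest: symD)
  also have "\<dots> = (\<Sum>u\<in>X. card (in_nbrs E u - X))"
  proof (intro sum.cong refl)
    fix u
    have "in_nbrs E u - X = {v \<in> V - X. (v, u) \<in> E}" using EV by (auto simp: in_nbrs_def)
    then show "(\<Sum>v\<in>V - X. if (v, u) \<in> E then 1 else 0) = card (in_nbrs E u - X)"
      using V card_filter[of "V - X" "\<lambda>v. (v, u) \<in> E"] by simp
  qed
  finally show ?thesis .
qed

lemma pmf_pv_pick_unweighted:
  assumes fin: "finite (in_nbrs E u)" and ne: "in_nbrs E u \<noteq> {}" and \<delta>: "\<delta> > -1"
  shows "pmf (pv_pick E (\<lambda>_. 1) S \<delta> X u) v =
     (if v \<in> in_nbrs E u then pv_fit S \<delta> X v u / (\<Sum>x\<in>in_nbrs E u. pv_fit S \<delta> X x u) else 0)"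
proof -
  define W where "W = (\<Sum>x\<in>in_nbrs E u. pv_fit S \<delta> X x u)"
  define f where "f v = (if v \<in> in_nbrs E u then pv_fit S \<delta> X v u / W else 0)" for v
  have fit_pos: "pv_fit S \<delta> X x u > 0" for x
    using \<delta> by (simp add: pv_fit_def)
  have W_pos: "W > 0"
    unfolding W_def using fin ne fit_pos by (intro sum_pos) auto
  have f_nonneg: "0 \<le> f x" for x
    using fit_pos W_pos by (simp add: f_def less_imp_le)
  have "(\<integral>\<^sup>+x. ennreal (f x) \<partial>count_space UNIV) = ennreal (\<Sum>x\<in>in_nbrs E u. f x)"
    using fin f_nonneg by (subst nn_integral_count_space') (auto simp: f_def sum_ennreal)
  also have "(\<Sum>x\<in>in_nbrs E u. f x) = 1"
    using W_pos by (simp add: f_def sum_divide_distrib[symmetric] W_def)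
  finally have "pmf (embed_pmf f) v = f v"
    using f_nonneg by (intro pmf_embed_pmf) simp_all
  moreover have "pv_pick E (\<lambda>_. 1) S \<delta> X u = embed_pmf f"
    unfolding pv_pick_def f_def W_def by (intro arg_cong[where f=embed_pmf]) (simp add: fun_eq_iff)
  ultimately show ?thesis
    by (simp add: f_def W_def)
qed

lemma pv_pick_mem_bernoulli:
  fixes E :: "('a \<times> 'a) set" and S X :: "'a set" and u :: 'a and \<delta> :: real
  assumes fin: "finite (in_nbrs E u)" and ne: "in_nbrs E u \<noteq> {}" and \<delta>: "\<delta> > -1"
  defines "F \<equiv> if u \<in> S then 1 + \<delta> else 1"
    and "a \<equiv> real (card (in_nbrs E u \<inter> X))" and "b \<equiv> real (card (in_nbrs E u - X))"
  shows "map_pmf (\<lambda>v. v \<in> X) (pv_pick E (\<lambda>_. 1) S \<delta> X u) = bernoulli_pmf (F * a / (F * a + b))"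
proof -
  let ?N = "in_nbrs E u" and ?p = "pv_pick E (\<lambda>_. 1) S \<delta> X u"
  have F_pos: "F > 0" using \<delta> by (simp add: F_def)
  have fit_sum: "(\<Sum>x\<in>?N. pv_fit S \<delta> X x u) = F * a + b"
  proof -
    have "(\<Sum>x\<in>?N. pv_fit S \<delta> X x u) = (\<Sum>x\<in>?N \<inter> X. F) + (\<Sum>x\<in>?N - X. 1)"
      using fin by (subst sum.Int_Diff[of _ _ X]) (auto simp: pv_fit_def F_def intro!: arg_cong2[where f="(+)"] sum.cong)
    then show ?thesis by (simp add: a_def b_def)
  qed
  have pmf_p: "pmf ?p v = (if v \<in> ?N then pv_fit S \<delta> X v u / (F * a + b) else 0)" for v
    using pmf_pv_pick_unweighted[OF fin ne \<delta>] fit_sum by simp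
  have "real (card ?N) = a + b"
    using card_Int_Diff[OF fin, of X] by (simp add: a_def b_def)
  moreover have "card ?N > 0"
    using fin ne by (simp add: card_gt_0_iff)
  ultimately have "a + b > 0"
    by (metis of_nat_0_less_iff)
  then have W_pos: "F * a + b > 0"
    using F_pos by (cases "a = 0") (auto simp: a_def b_def intro: add_pos_nonneg)
  have prob_X: "measure_pmf.prob ?p X = F * a / (F * a + b)"
  proof -
    have "set_pmf ?p \<subseteq> ?N" by (auto simp: set_pmf_iff pmf_p split: if_splits)
    then have "measure_pmf.prob ?p X = measure_pmf.prob ?p (?N \<inter> X)"
      by (metis measure_Int_set_pmf Int_absorb2 Int_assoc Int_commute)
    also have "\<dots> = (\<Sum>v\<in>?N \<inter> X. F / (F * a + b))"
      using fin by (simp add: measure_measure_pmf_finite pmf_p pv_fit_def F_def)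
    finally show ?thesis by (simp add: a_def)
  qed
  have p_le_1: "F * a / (F * a + b) \<le> 1"
    using W_pos by (simp add: b_def)
  show ?thesis
  proof (rule pmf_eqI)
    fix i :: bool
    have "pmf (map_pmf (\<lambda>v. v \<in> X) ?p) True = F * a / (F * a + b)"
      by (simp add: pmf_map vimage_def prob_X)
    moreover have "pmf (map_pmf (\<lambda>v. v \<in> X) ?p) False = 1 - F * a / (F * a + b)"
      using measure_pmf.prob_compl[of X ?p] by (simp add: pmf_map vimage_def prob_X set_diff_eq)
    ultimately show "pmf (map_pmf (\<lambda>v. v \<in> X) ?p) i = pmf (bernoulli_pmf (F * a / (F * a + b))) i"
      using W_pos F_pos p_le_1 by (cases i) (simp_all add: a_def)
  qed
qed

lemma square_gain_when_joining:
  fixes F a b \<phi> :: real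
  assumes "F \<ge> 1" "a \<ge> 0" "b \<ge> 0" "a + b > 0" "\<phi> \<ge> 0"
  shows "\<phi>^2 + 2*\<phi>*a + a*(a+b) \<le> (\<phi> + (a+b))^2 * (F*a / (F*a+b)) + \<phi>^2 * (1 - F*a / (F*a+b))"
proof -
  have "F*a \<ge> a" using assms mult_right_mono[of 1 F a] by simp
  then have W: "F*a + b > 0" using assms by linarith
  have "(\<phi> + (a+b))^2 * (F*a) + \<phi>^2 * b - (\<phi>^2 + 2*\<phi>*a + a*(a+b)) * (F*a+b) = (2*\<phi>+(a+b))*(a*b*(F-1))"
    by algebra
  moreover have "(2*\<phi>+(a+b))*(a*b*(F-1)) \<ge> 0" using assms by simp
  ultimately have "\<phi>^2 + 2*\<phi>*a + a*(a+b) \<le> ((\<phi> + (a+b))^2 * (F*a) + \<phi>^2 * b) / (F*a+b)"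
    using W by (simp add: le_divide_eq)
  moreover have "1 - F*a / (F*a+b) = b / (F*a+b)"
    using W by (simp add: diff_divide_eq_iff)
  ultimately show ?thesis
    by (simp add: add_divide_distrib)
qed

lemma square_gain_when_leaving:
  fixes F a b \<phi> :: real
  assumes "F \<ge> 1" "a \<ge> 0" "b \<ge> 0" "a + b > 0" "\<phi> \<ge> 0"
  shows "\<phi>^2 - 2*\<phi>*b \<le> \<phi>^2 * (F*a / (F*a+b)) + (\<phi> - (a+b))^2 * (1 - F*a / (F*a+b))"
proof -
  have "F*a \<ge> a" using assms mult_right_mono[of 1 F a] by simp
  then have W: "F*a + b > 0" using assms by linarith
  have "\<phi>^2 * (F*a) + (\<phi> - (a+b))^2 * b - (\<phi>^2 - 2*\<phi>*b) * (F*a+b) = b*(a+b)^2 + 2*\<phi>*b*((F-1)*a)"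
    by algebra
  moreover have "b*(a+b)^2 + 2*\<phi>*b*((F-1)*a) \<ge> 0" using assms by simp
  ultimately have "\<phi>^2 - 2*\<phi>*b \<le> (\<phi>^2 * (F*a) + (\<phi> - (a+b))^2 * b) / (F*a+b)"
    using W by (simp add: le_divide_eq)
  moreover have "1 - F*a / (F*a+b) = b / (F*a+b)"
    using W by (simp add: diff_divide_eq_iff)
  ultimately show ?thesis
    by (simp add: add_divide_distrib)
qed

lemma expectation_vol_sq_update_ge:
  fixes E :: "('a \<times> 'a) set" and S X :: "'a set" and u :: 'a and \<delta> :: real
  assumes fin: "finite (in_nbrs E u)" and ne: "in_nbrs E u \<noteq> {}" and \<delta>: "\<delta> \<ge> 0" and X: "finite X"
  defines "a \<equiv> real (card (in_nbrs E u \<inter> X))" and "b \<equiv> real (card (in_nbrs E u - X))"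
  shows "vol E X ^ 2 + (if u \<in> X then - 2 * vol E X * b else 2 * vol E X * a + a * (a + b))
    \<le> measure_pmf.expectation
         (map_pmf (\<lambda>v. if v \<in> X then insert u X else X - {u}) (pv_pick E (\<lambda>_. 1) S \<delta> X u))
         (\<lambda>Y. vol E Y ^ 2)"
proof -
  let ?update = "\<lambda>v. if v \<in> X then insert u X else X - {u}"
    and ?pick = "pv_pick E (\<lambda>_. 1) S \<delta> X u"
  define F where "F = (if u \<in> S then 1 + \<delta> else 1)"
  define p where "p = F * a / (F * a + b)"
  have F: "F \<ge> 1" using \<delta> by (simp add: F_def)
  have deg: "real (card (in_nbrs E u)) = a + b"
    using card_Int_Diff[OF fin, of X] by (simp add: a_def b_def)
  have "a + b > 0"
    using fin ne by (simp add: deg[symmetric] card_gt_0_iff)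
  have "map_pmf ?update ?pick = map_pmf (\<lambda>c. if c then insert u X else X - {u}) (map_pmf (\<lambda>v. v \<in> X) ?pick)"
    by (simp add: map_pmf_comp)
  also have "\<dots> = map_pmf (\<lambda>c. if c then insert u X else X - {u}) (bernoulli_pmf p)"
    using pv_pick_mem_bernoulli[OF fin ne, where S=S and X=X] \<delta> by (simp add: p_def F_def a_def b_def)
  finally have update_bernoulli: "map_pmf ?update ?pick = map_pmf (\<lambda>c. if c then insert u X else X - {u}) (bernoulli_pmf p)" .
  have "0 \<le> F * a" "a \<le> F * a"
    using F mult_right_mono[of 1 F a] by (simp_all add: a_def)
  then have "0 \<le> p" "p \<le> 1"
    using \<open>a + b > 0\<close> by (simp_all add: p_def b_def divide_le_eq)
  then have expectation: "measure_pmf.expectation (map_pmf ?update ?pick) (\<lambda>Y. vol E Y ^ 2)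
      = vol E (insert u X) ^ 2 * p + vol E (X - {u}) ^ 2 * (1 - p)"
    unfolding update_bernoulli by simp
  show ?thesis
  proof (cases "u \<in> X")
    case True
    then have "vol E (X - {u}) = vol E X - (a + b)"
      using X by (simp add: vol_def sum_diff1 deg)
    then show ?thesis
      unfolding expectation using True square_gain_when_leaving[OF F _ _ \<open>a + b > 0\<close> vol_nonneg[of E X]]
      by (simp add: insert_absorb p_def a_def b_def)
  next
    case False
    then have "vol E (insert u X) = vol E X + (a + b)"
      using X by (simp add: vol_def deg)
    then show ?thesis
      unfolding expectation using False square_gain_when_joining[OF F _ _ \<open>a + b > 0\<close> vol_nonneg[of E X]]
      by (simp add: p_def a_def b_def)
  qed
qed

lemma sum_update_gains_ge_one:
  fixes E :: "('a \<times> 'a) set" and V X :: "'a set" and \<phi> :: real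
  assumes V: "finite V" and EV: "E \<subseteq> V \<times> V" and symE: "sym E"
    and conn: "\<forall>u\<in>V. \<forall>v\<in>V. (u, v) \<in> E\<^sup>*"
    and XV: "X \<subseteq> V" and ne: "X \<noteq> {}" and nV: "X \<noteq> V"
  defines "a \<equiv> \<lambda>u. real (card (in_nbrs E u \<inter> X))" and "b \<equiv> \<lambda>u. real (card (in_nbrs E u - X))"
  shows "1 \<le> (\<Sum>u\<in>V. if u \<in> X then - 2 * \<phi> * b u else 2 * \<phi> * a u + a u * (a u + b u))"
proof -
  have cut: "(\<Sum>u\<in>V - X. a u) = (\<Sum>u\<in>X. b u)"
    using sum_card_in_nbrs_cut_sym[OF V EV symE XV] unfolding a_def b_def by (metis of_nat_sum)
  obtain w where w: "w \<in> V - X" "a w \<ge> 1"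
  proof -
    obtain x y where xy: "x \<in> X" "y \<in> V - X" using ne nV XV by blast
    then have "(x, y) \<in> E\<^sup>*" using conn XV by blast
    then obtain p q where pq: "(p, q) \<in> E" "p \<in> X" "q \<notin> X"
      using rtrancl_leaves_set xy(1) DiffD2[OF xy(2)] by metis
    then have "in_nbrs E q \<inter> X \<noteq> {}" by (auto simp: in_nbrs_def)
    then have "a q \<ge> 1"
      using finite_in_nbrs[OF V EV, of q] by (simp add: a_def Suc_le_eq card_gt_0_iff)
    then show ?thesis using that pq EV by blast
  qed
  have "(\<Sum>u\<in>V. if u \<in> X then - 2 * \<phi> * b u else 2 * \<phi> * a u + a u * (a u + b u))
      = (\<Sum>u\<in>V - X. 2 * \<phi> * a u + a u * (a u + b u)) + (\<Sum>u\<in>X. - 2 * \<phi> * b u)"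
    by (subst sum.subset_diff[OF XV V]) (auto intro!: arg_cong2[where f="(+)"] sum.cong)
  also have "\<dots> = 2 * \<phi> * ((\<Sum>u\<in>V - X. a u) - (\<Sum>u\<in>X. b u)) + (\<Sum>u\<in>V - X. a u * (a u + b u))"
    by (simp add: sum.distrib sum_distrib_left sum_negf right_diff_distrib)
  also have "\<dots> = (\<Sum>u\<in>V - X. a u * (a u + b u))"
    by (simp add: cut)
  also have "\<dots> \<ge> a w * (a w + b w)"
    using V w by (intro member_le_sum) (auto simp: a_def b_def)
  moreover have "a w * (a w + b w) \<ge> 1"
    using w(2) mult_mono[of 1 "a w" 1 "a w + b w"] by (simp add: b_def)
  ultimately show ?thesis by linarith
qed

lemma pv_step_vol_sq_drift:
  assumes V: "finite V" and EV: "E \<subseteq> V \<times> V" and symE: "sym E"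
    and conn: "\<forall>u\<in>V. \<forall>v\<in>V. (u, v) \<in> E\<^sup>*" and \<delta>: "\<delta> \<ge> 0"
    and XV: "X \<subseteq> V" and ne: "X \<noteq> {}" and nV: "X \<noteq> V"
  shows "vol E X ^ 2 + 1 / real (card V)
    \<le> measure_pmf.expectation (pv_step V E (\<lambda>_. 1) S \<delta> X) (\<lambda>Y. vol E Y ^ 2)"
proof -
  define G where "G u = map_pmf (\<lambda>v. if v \<in> X then insert u X else X - {u}) (pv_pick E (\<lambda>_. 1) S \<delta> X u)" for u
  define a where "a u = real (card (in_nbrs E u \<inter> X))" for u
  define b where "b u = real (card (in_nbrs E u - X))" for u
  define gain where "gain u = (if u \<in> X then - 2 * vol E X * b u else 2 * vol E X * a u + a u * (a u + b u))" for u
  obtain x y where xy: "x \<in> X" "y \<in> V - X" using ne nV XV by blast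
  have X: "finite X" using V XV by (rule finite_subset[rotated])
  have V_ne: "V \<noteq> {}" using xy by blast
  have n_pos: "real (card V) > 0" using V xy by (auto simp: card_gt_0_iff)
  have in_nbrs_ne: "in_nbrs E u \<noteq> {}" if "u \<in> V" for u
  proof -
    obtain w where w: "w \<in> V" "w \<noteq> u" using xy XV by blast
    then have "(w, u) \<in> E\<^sup>*" using conn that by blast
    then show ?thesis using w(2) by (rule in_nbrs_nonempty)
  qed
  have "real (card V) * vol E X ^ 2 + 1 \<le> (\<Sum>u\<in>V. vol E X ^ 2 + gain u)"
    using sum_update_gains_ge_one[OF V EV symE conn XV ne nV, of "vol E X"]
    unfolding gain_def a_def b_def by (simp add: sum.distrib)
  also have "\<dots> \<le> (\<Sum>u\<in>V. measure_pmf.expectation (G u) (\<lambda>Y. vol E Y ^ 2))"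
    unfolding gain_def a_def b_def G_def
    using finite_in_nbrs[OF V EV] in_nbrs_ne \<delta> X by (intro sum_mono expectation_vol_sq_update_ge) auto
  also have "\<dots> = real (card V) * measure_pmf.expectation (pv_step V E (\<lambda>_. 1) S \<delta> X) (\<lambda>Y. vol E Y ^ 2)"
  proof -
    have fin: "finite (set_pmf (G u))" for u
      by (rule finite_subset[of _ "{insert u X, X - {u}}"]) (auto simp: G_def)
    have "pv_step V E (\<lambda>_. 1) S \<delta> X = pmf_of_set V \<bind> G"
      using ne nV by (simp add: pv_step_def G_def[abs_def])
    also have "measure_pmf.expectation \<dots> (\<lambda>Y. vol E Y ^ 2)
        = (\<Sum>u\<in>V. measure_pmf.expectation (G u) (\<lambda>Y. vol E Y ^ 2) /\<^sub>R real (card V))"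
      by (rule pmf_expectation_bind_pmf_of_set[OF V_ne V fin])
    finally have "measure_pmf.expectation (pv_step V E (\<lambda>_. 1) S \<delta> X) (\<lambda>Y. vol E Y ^ 2)
        = (\<Sum>u\<in>V. measure_pmf.expectation (G u) (\<lambda>Y. vol E Y ^ 2)) / real (card V)"
      by (simp add: sum_distrib_left divide_inverse mult.commute)
    then show ?thesis using n_pos by simp
  qed
  finally show ?thesis
    using n_pos by (simp add: field_simps)
qed

theorem mainTheorem1:
  fixes V :: "'a set" and E :: "('a \<times> 'a) set" and S :: "'a set" and \<delta> :: real
  assumes "finite V" and "V \<noteq> {}"
    and "E \<subseteq> V \<times> V" and "sym E" and "irrefl E"
    and "\<forall>u\<in>V. \<forall>v\<in>V. (u, v) \<in> E\<^sup>*"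
    and "S \<subseteq> V" and "\<delta> \<ge> 1"
  shows "pv_absorption_time V E (\<lambda>_. 1) S \<delta> \<le> ennreal (real (card V) ^ 5)"
proof -
  let ?n = "real (card V)" and ?\<psi> = "\<lambda>Y. vol E Y ^ 2"
  define p0 where "p0 = map_pmf (\<lambda>u. {u}) (pmf_of_set V)"
  have n_pos: "?n > 0" using assms(1,2) by (simp add: card_gt_0_iff)
  have "pv_absorption_time V E (\<lambda>_. 1) S \<delta> \<le> ennreal ((vol E V ^ 2 - measure_pmf.expectation p0 ?\<psi>) / (1 / ?n))"
    unfolding pv_absorption_time_def pv_dist_def p0_def[symmetric]
  proof (rule absorption_sum_le_potential_gap[where P = "Pow V"])
    show "set_pmf (pv_step V E (\<lambda>_. 1) S \<delta> X) \<subseteq> Pow V" if "X \<in> Pow V" for X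
      using that assms(1,2) by (auto simp: pv_step_def)
    show "?\<psi> X \<le> vol E V ^ 2" if "X \<in> Pow V" for X
      using that assms(1) by (auto intro!: power_mono vol_mono vol_nonneg)
    show "?\<psi> X + 1 / ?n \<le> measure_pmf.expectation (pv_step V E (\<lambda>_. 1) S \<delta> X) ?\<psi>"
      if "X \<in> Pow V" "X \<in> {X. X \<noteq> {} \<and> X \<noteq> V}" for X
      using that assms by (intro pv_step_vol_sq_drift) auto
  qed (use assms(1,2) n_pos in \<open>auto simp: p0_def pv_step_def\<close>)
  also have "\<dots> \<le> ennreal (?n ^ 5)"
  proof (intro ennreal_leI)
    have "0 \<le> measure_pmf.expectation p0 ?\<psi>" by simp
    moreover have "vol E V ^ 2 \<le> (?n ^ 2) ^ 2"
      using vol_le_card_sq[OF assms(1,3)] by (intro power_mono vol_nonneg)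
    ultimately have "vol E V ^ 2 - measure_pmf.expectation p0 ?\<psi> \<le> (?n ^ 2) ^ 2"
      by linarith
    then have "(vol E V ^ 2 - measure_pmf.expectation p0 ?\<psi>) / (1 / ?n) \<le> ?n * (?n ^ 2) ^ 2"
      using n_pos by (simp add: mult_left_mono)
    then show "(vol E V ^ 2 - measure_pmf.expectation p0 ?\<psi>) / (1 / ?n) \<le> ?n ^ 5"
      by (simp add: eval_nat_numeral)
  qed
  finally show ?thesis .
qed

end
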